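(* Let $\Omega$ be a compact metric space, $T:\Omega\to\Omega$ continuous with a dense orbit, $\mathcal{H}$ a complete metric space and $A:\Omega\to\mathrm{Isom}(\mathcal{H})$ continuous for the topology of uniform convergence on bounded sets. Let $F:\Omega\times\mathcal{H}\to\Omega\times\mathcal{H}$, $F(\omega,h)=(T\omega,A(\omega)\cdot h)$, and $I_T(\omega,h)=(T\omega,h)$. The following are equivalent: (P2) there exists $G:\Omega\to\mathrm{Homeo}(\mathcal{H})$, continuous for the pointwise topology, such that the map $\mathcal{G}(\omega,h)=(\omega,G(\omega)\cdot h)$ satisfies $\mathcal{G}^{-1}\circ F\circ\mathcal{G}=I_T$; (P3) for every $(\omega_0,h_0)\in\Omega\times\mathcal{H}$ there exists a continuous map $s_{\omega_0,h_0}:\Omega\to\mathcal{H}$ with $s_{\omega_0,h_0}(\omega_0)=h_0$ and $A(\omega)\cdot s_{\omega_0,h_0}(\omega)=s_{\omega_0,h_0}(T\omega)$ for all $\omega\in\Omega$, and for every $\omega_0,\omega\in\Omega$ the map $h_0\mapsto s_{\omega_0,h_0}(\omega)$ is continuous.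
   Context: Continuity of $A$ for uniform convergence on bounded sets: for every bounded $K\subset\mathcal{H}$, $\omega_0\in\Omega$, $\varepsilon>0$ there is $\delta>0$ with $d_{\mathcal{H}}(A(\omega)h,A(\omega_0)h)<\varepsilon$ for all $h\in K$ when $d_\Omega(\omega,\omega_0)<\delta$. $\mathrm{Homeo}(\mathcal{H})$ is the group of homeomorphisms of $\mathcal{H}$; $G:\Omega\to\mathrm{Homeo}(\mathcal{H})$ is continuous for the pointwise topology if $\omega\mapsto G(\omega)\cdot h$ is continuous for each $h\in\mathcal{H}$. *)

theory Defs
  imports "HOL-Analysis.Analysis"
begin

definition is_isom :: "('b::metric_space \<Rightarrow> 'b) \<Rightarrow> bool" where
  "is_isom f \<longleftrightarrow> (\<forall>x y. dist (f x) (f y) = dist x y) \<and> surj f"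

definition is_homeo :: "('b::topological_space \<Rightarrow> 'b) \<Rightarrow> bool" where
  "is_homeo g \<longleftrightarrow> (\<exists>g'. homeomorphism UNIV UNIV g g')"

definition cont_unif_bounded :: "('a::metric_space \<Rightarrow> 'b::metric_space \<Rightarrow> 'b) \<Rightarrow> bool" where
  "cont_unif_bounded A \<longleftrightarrow>
     (\<forall>K \<omega>0 \<epsilon>. bounded K \<and> \<epsilon> > 0 \<longrightarrow>
        (\<exists>\<delta>>0. \<forall>\<omega>. dist \<omega> \<omega>0 < \<delta> \<longrightarrow> (\<forall>h\<in>K. dist (A \<omega> h) (A \<omega>0 h) < \<epsilon>)))"

definition cont_pointwise :: "('a::topological_space \<Rightarrow> 'b::topological_space \<Rightarrow> 'b) \<Rightarrow> bool" where
  "cont_pointwise G \<longleftrightarrow> (\<forall>h. continuous_on UNIV (\<lambda>\<omega>. G \<omega> h))"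

definition has_dense_orbit :: "('a::topological_space \<Rightarrow> 'a) \<Rightarrow> bool" where
  "has_dense_orbit T \<longleftrightarrow> (\<exists>\<omega>. closure (range (\<lambda>n. (T ^^ n) \<omega>)) = UNIV)"

end

theory Submission
  imports Defs
begin

text \<open>
  A fibrewise map \<open>(\<omega>, h) \<mapsto> (\<omega>, G \<omega> h)\<close> conjugates \<open>F\<close> to \<open>I\<^sub>T\<close> exactly when
  \<open>A \<omega> \<circ> G \<omega> = G (T \<omega>)\<close>, i.e. when every \<open>\<omega> \<mapsto> G \<omega> h\<close> is an equivariant section; so
  a conjugacy yields the sections \<open>\<omega> \<mapsto> G \<omega> (G \<omega>\<^sub>0\<inverse> h\<^sub>0)\<close>. Conversely, fix a point \<open>w\<close>
  with dense orbit and set \<open>G \<omega> h = s\<^bsub>w,h\<^esub> \<omega>\<close>. As the \<open>A \<omega>\<close> are isometries, the distance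
  between two equivariant continuous sections is constant along the orbit of \<open>w\<close>, hence
  constant; so each \<open>G \<omega>\<close> is isometric, and it is onto because an equivariant section is
  determined by its value at \<open>w\<close>.
\<close>

lemma is_homeo_iff_homeomorphism_inv:
  "is_homeo g \<longleftrightarrow> homeomorphism UNIV UNIV g (inv g)"
proof
  assume "is_homeo g"
  then obtain g' where g': "homeomorphism UNIV UNIV g g'"
    unfolding is_homeo_def by blast
  then have "inv g = g'"
    by (intro ext inv_equality) (auto simp: homeomorphism_def)
  with g' show "homeomorphism UNIV UNIV g (inv g)" by simp
qed (auto simp: is_homeo_def)

lemma is_homeo_imp_bij: "is_homeo g \<Longrightarrow> bij g"
  unfolding is_homeo_iff_homeomorphism_inv homeomorphism_def
  by (metis bij_betw_byWitness subset_UNIV)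

lemma continuous_on_isometry:
  fixes g :: "'a::metric_space \<Rightarrow> 'b::metric_space"
  assumes "\<And>x y. dist (g x) (g y) = dist x y"
  shows "continuous_on S g"
  unfolding continuous_on_iff using assms by metis

lemma is_isom_imp_is_homeo:
  fixes g :: "'b::metric_space \<Rightarrow> 'b"
  assumes "is_isom g"
  shows "is_homeo g"
proof -
  have dist_g: "\<And>x y. dist (g x) (g y) = dist x y" and "surj g"
    using assms by (auto simp: is_isom_def)
  then have "bij g"
    by (metis bijI dist_eq_0_iff injI)
  then have "\<And>x y. dist (inv g x) (inv g y) = dist x y"
    by (metis dist_g bij_inv_eq_iff)
  with \<open>bij g\<close> dist_g show ?thesis
    unfolding is_homeo_iff_homeomorphism_inv
    by (intro homeomorphismI continuous_on_isometry) (auto simp: bij_is_inj bij_is_surj surj_f_inv_f)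
qed

lemma inv_comp_conj_eq_iff:
  assumes "bij \<Phi>"
  shows "inv \<Phi> \<circ> F \<circ> \<Phi> = J \<longleftrightarrow> F \<circ> \<Phi> = \<Phi> \<circ> J"
proof -
  have "inv \<Phi> \<circ> \<Phi> = id" "\<Phi> \<circ> inv \<Phi> = id"
    using assms by (simp_all add: bij_is_inj bij_is_surj[THEN surj_iff[THEN iffD1]])
  then show ?thesis
    by (metis comp_assoc comp_id id_comp)
qed

lemma bij_fibrewise:
  assumes "\<And>\<omega>. bij (G \<omega>)"
  shows "bij (\<lambda>(\<omega>, h). (\<omega>, G \<omega> h))"
  by (rule bij_betw_byWitness[where f' = "\<lambda>(\<omega>, h). (\<omega>, inv (G \<omega>) h)"])
     (use assms in \<open>auto simp: bij_is_inj bij_is_surj surj_f_inv_f\<close>)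

lemma fibrewise_conjugacy_iff:
  assumes "\<And>\<omega>. bij (G \<omega>)"
  shows "inv (\<lambda>(\<omega>, h). (\<omega>, G \<omega> h)) \<circ> (\<lambda>(\<omega>, h). (T \<omega>, A \<omega> h)) \<circ> (\<lambda>(\<omega>, h). (\<omega>, G \<omega> h))
           = (\<lambda>(\<omega>, h). (T \<omega>, h))
         \<longleftrightarrow> (\<forall>\<omega> h. A \<omega> (G \<omega> h) = G (T \<omega>) h)"
  unfolding inv_comp_conj_eq_iff[OF bij_fibrewise[OF assms]] by (auto simp: fun_eq_iff)

lemma dense_orbit_closed_invariant_eq_UNIV:
  fixes T :: "'a::topological_space \<Rightarrow> 'a"
  assumes "closure (range (\<lambda>n. (T ^^ n) w)) = UNIV"
    and "closed S" and "w \<in> S" and "\<And>x. x \<in> S \<Longrightarrow> T x \<in> S"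
  shows "S = UNIV"
proof -
  have "(T ^^ n) w \<in> S" for n
    by (induction n) (simp_all add: assms(3,4))
  then have "closure (range (\<lambda>n. (T ^^ n) w)) \<subseteq> S"
    using assms(2) by (intro closure_minimal) auto
  with assms(1) show ?thesis by blast
qed

definition equivariant_section ::
    "('a \<Rightarrow> 'a) \<Rightarrow> ('a \<Rightarrow> 'b \<Rightarrow> 'b) \<Rightarrow> ('a::topological_space \<Rightarrow> 'b::topological_space) \<Rightarrow> bool"
  where "equivariant_section T A \<sigma> \<longleftrightarrow> continuous_on UNIV \<sigma> \<and> (\<forall>\<omega>. A \<omega> (\<sigma> \<omega>) = \<sigma> (T \<omega>))"

lemma equivariant_sectionD:
  assumes "equivariant_section T A \<sigma>"
  shows "continuous_on UNIV \<sigma>" and "A \<omega> (\<sigma> \<omega>) = \<sigma> (T \<omega>)"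
  using assms by (simp_all add: equivariant_section_def)

lemma equivariant_sections_eq:
  fixes \<sigma>\<^sub>1 \<sigma>\<^sub>2 :: "'a::topological_space \<Rightarrow> 'b::t2_space"
  assumes orbit: "closure (range (\<lambda>n. (T ^^ n) w)) = UNIV"
    and \<sigma>\<^sub>1: "equivariant_section T A \<sigma>\<^sub>1" and \<sigma>\<^sub>2: "equivariant_section T A \<sigma>\<^sub>2"
    and "\<sigma>\<^sub>1 w = \<sigma>\<^sub>2 w"
  shows "\<sigma>\<^sub>1 = \<sigma>\<^sub>2"
proof -
  have "{\<omega>. \<sigma>\<^sub>1 \<omega> = \<sigma>\<^sub>2 \<omega>} = UNIV"
  proof (rule dense_orbit_closed_invariant_eq_UNIV[OF orbit])
    show "closed {\<omega>. \<sigma>\<^sub>1 \<omega> = \<sigma>\<^sub>2 \<omega>}"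
      using \<sigma>\<^sub>1 \<sigma>\<^sub>2 by (intro closed_Collect_eq) (simp_all add: equivariant_sectionD)
    show "T \<omega> \<in> {\<omega>. \<sigma>\<^sub>1 \<omega> = \<sigma>\<^sub>2 \<omega>}" if "\<omega> \<in> {\<omega>. \<sigma>\<^sub>1 \<omega> = \<sigma>\<^sub>2 \<omega>}" for \<omega>
      using that equivariant_sectionD(2)[OF \<sigma>\<^sub>1, of \<omega>] equivariant_sectionD(2)[OF \<sigma>\<^sub>2, of \<omega>] by simp
  qed (use \<open>\<sigma>\<^sub>1 w = \<sigma>\<^sub>2 w\<close> in simp)
  then show ?thesis by auto
qed

lemma dist_equivariant_sections_const:
  fixes \<sigma>\<^sub>1 \<sigma>\<^sub>2 :: "'a::topological_space \<Rightarrow> 'b::metric_space"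
  assumes orbit: "closure (range (\<lambda>n. (T ^^ n) w)) = UNIV"
    and isometric: "\<And>\<omega> x y. dist (A \<omega> x) (A \<omega> y) = dist x y"
    and \<sigma>\<^sub>1: "equivariant_section T A \<sigma>\<^sub>1" and \<sigma>\<^sub>2: "equivariant_section T A \<sigma>\<^sub>2"
  shows "dist (\<sigma>\<^sub>1 \<omega>) (\<sigma>\<^sub>2 \<omega>) = dist (\<sigma>\<^sub>1 w) (\<sigma>\<^sub>2 w)"
proof -
  let ?S = "{\<omega>. dist (\<sigma>\<^sub>1 \<omega>) (\<sigma>\<^sub>2 \<omega>) = dist (\<sigma>\<^sub>1 w) (\<sigma>\<^sub>2 w)}"
  have "?S = UNIV"
  proof (rule dense_orbit_closed_invariant_eq_UNIV[OF orbit])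
    show "closed ?S"
      using \<sigma>\<^sub>1 \<sigma>\<^sub>2 by (intro closed_Collect_eq continuous_intros) (simp_all add: equivariant_sectionD)
    have "dist (\<sigma>\<^sub>1 (T \<omega>)) (\<sigma>\<^sub>2 (T \<omega>)) = dist (\<sigma>\<^sub>1 \<omega>) (\<sigma>\<^sub>2 \<omega>)" for \<omega>
      using isometric equivariant_sectionD(2)[OF \<sigma>\<^sub>1, of \<omega>] equivariant_sectionD(2)[OF \<sigma>\<^sub>2, of \<omega>] by metis
    then show "T \<omega> \<in> ?S" if "\<omega> \<in> ?S" for \<omega>
      using that by simp
  qed simp
  then show ?thesis by auto
qed

lemma equivariant_sections_of_conjugacy:
  assumes homeo: "\<And>\<omega>. is_homeo (G \<omega>)" and "cont_pointwise G"
    and conj: "\<And>\<omega> h. A \<omega> (G \<omega> h) = G (T \<omega>) h"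
  defines "s \<equiv> \<lambda>\<omega>\<^sub>0 h\<^sub>0 \<omega>. G \<omega> (inv (G \<omega>\<^sub>0) h\<^sub>0)"
  shows "equivariant_section T A (s \<omega>\<^sub>0 h\<^sub>0)" and "s \<omega>\<^sub>0 h\<^sub>0 \<omega>\<^sub>0 = h\<^sub>0"
    and "continuous_on UNIV (\<lambda>h\<^sub>0. s \<omega>\<^sub>0 h\<^sub>0 \<omega>)"
proof -
  show "equivariant_section T A (s \<omega>\<^sub>0 h\<^sub>0)"
    using \<open>cont_pointwise G\<close> by (simp add: equivariant_section_def cont_pointwise_def s_def conj)
  show "s \<omega>\<^sub>0 h\<^sub>0 \<omega>\<^sub>0 = h\<^sub>0"
    using is_homeo_imp_bij[OF homeo] by (simp add: s_def bij_is_surj surj_f_inv_f)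
  have "homeomorphism UNIV UNIV (inv (G \<omega>\<^sub>0)) (G \<omega>\<^sub>0)"
    using homeo[of \<omega>\<^sub>0] by (simp add: is_homeo_iff_homeomorphism_inv homeomorphism_symD)
  then have "homeomorphism UNIV UNIV (G \<omega> \<circ> inv (G \<omega>\<^sub>0)) (G \<omega>\<^sub>0 \<circ> inv (G \<omega>))"
    by (rule homeomorphism_compose) (use homeo in \<open>simp add: is_homeo_iff_homeomorphism_inv\<close>)
  then show "continuous_on UNIV (\<lambda>h\<^sub>0. s \<omega>\<^sub>0 h\<^sub>0 \<omega>)"
    by (simp add: homeomorphism_def s_def o_def)
qed

lemma is_isom_eval_equivariant_sections:
  fixes A :: "'a::topological_space \<Rightarrow> 'b::metric_space \<Rightarrow> 'b"
  assumes orbit: "closure (range (\<lambda>n. (T ^^ n) w)) = UNIV"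
    and isom: "\<And>\<omega>. is_isom (A \<omega>)"
    and sections: "\<And>\<omega>\<^sub>0 h\<^sub>0. equivariant_section T A (s \<omega>\<^sub>0 h\<^sub>0)"
    and initial: "\<And>\<omega>\<^sub>0 h\<^sub>0. s \<omega>\<^sub>0 h\<^sub>0 \<omega>\<^sub>0 = h\<^sub>0"
  shows "is_isom (\<lambda>h. s w h \<omega>)"
proof -
  have "dist (s w x \<omega>) (s w y \<omega>) = dist (s w x w) (s w y w)" for x y
    by (rule dist_equivariant_sections_const[OF orbit _ sections sections])
       (use isom in \<open>simp add: is_isom_def\<close>)
  then have "dist (s w x \<omega>) (s w y \<omega>) = dist x y" for x y
    by (simp add: initial)
  moreover have "s w (s \<omega> h w) = s \<omega> h" for h
    by (rule equivariant_sections_eq[OF orbit sections sections]) (simp add: initial)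
  then have "s w (s \<omega> h w) \<omega> = h" for h
    by (simp add: initial)
  then have "surj (\<lambda>h. s w h \<omega>)"
    by (rule surjI)
  ultimately show ?thesis
    unfolding is_isom_def by blast
qed

theorem proposition2p8:
  fixes T :: "'a::metric_space \<Rightarrow> 'a"
    and A :: "'a \<Rightarrow> 'b::complete_space \<Rightarrow> 'b"
  assumes "compact (UNIV :: 'a set)"
    and "continuous_on UNIV T"
    and "has_dense_orbit T"
    and "\<forall>\<omega>. is_isom (A \<omega>)"
    and "cont_unif_bounded A"
  shows "(\<exists>G :: 'a \<Rightarrow> 'b \<Rightarrow> 'b.
            (\<forall>\<omega>. is_homeo (G \<omega>)) \<and> cont_pointwise G \<and>
            (let F = (\<lambda>(\<omega>, h). (T \<omega>, A \<omega> h));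
                 \<G> = (\<lambda>(\<omega>, h). (\<omega>, G \<omega> h));
                 I\<^sub>T = (\<lambda>(\<omega>, h). (T \<omega>, h))
             in inv \<G> \<circ> F \<circ> \<G> = I\<^sub>T))
     \<longleftrightarrow>
         (\<exists>s :: 'a \<Rightarrow> 'b \<Rightarrow> 'a \<Rightarrow> 'b.
            (\<forall>\<omega>0 h0. continuous_on UNIV (s \<omega>0 h0) \<and> s \<omega>0 h0 \<omega>0 = h0 \<and>
                      (\<forall>\<omega>. A \<omega> (s \<omega>0 h0 \<omega>) = s \<omega>0 h0 (T \<omega>))) \<and>
            (\<forall>\<omega>0 \<omega>. continuous_on UNIV (\<lambda>h0. s \<omega>0 h0 \<omega>)))"
  (is "?P2 \<longleftrightarrow> ?P3")
proof -
  let ?conjugacy = "\<lambda>G. (\<forall>\<omega>. is_homeo (G \<omega>)) \<and> cont_pointwise G \<and> (\<forall>\<omega> h. A \<omega> (G \<omega> h) = G (T \<omega>) h)"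
  let ?sections = "\<lambda>s. (\<forall>\<omega>\<^sub>0 h\<^sub>0. equivariant_section T A (s \<omega>\<^sub>0 h\<^sub>0) \<and> s \<omega>\<^sub>0 h\<^sub>0 \<omega>\<^sub>0 = h\<^sub>0) \<and>
                      (\<forall>\<omega>\<^sub>0 \<omega>. continuous_on UNIV (\<lambda>h\<^sub>0. s \<omega>\<^sub>0 h\<^sub>0 \<omega>))"
  obtain w where orbit: "closure (range (\<lambda>n. (T ^^ n) w)) = UNIV"
    using \<open>has_dense_orbit T\<close> unfolding has_dense_orbit_def by blast
  have "?P2 \<longleftrightarrow> Ex ?conjugacy"
    by (auto simp: Let_def fibrewise_conjugacy_iff is_homeo_imp_bij)
  also have "\<dots> \<longleftrightarrow> Ex ?sections"
  proof
    assume "Ex ?conjugacy"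
    then obtain G where "?conjugacy G" ..
    then show "Ex ?sections"
      by (intro exI[of _ "\<lambda>\<omega>\<^sub>0 h\<^sub>0 \<omega>. G \<omega> (inv (G \<omega>\<^sub>0) h\<^sub>0)"]) (simp add: equivariant_sections_of_conjugacy)
  next
    assume "Ex ?sections"
    then obtain s where sections: "\<And>\<omega>\<^sub>0 h\<^sub>0. equivariant_section T A (s \<omega>\<^sub>0 h\<^sub>0)"
      and initial: "\<And>\<omega>\<^sub>0 h\<^sub>0. s \<omega>\<^sub>0 h\<^sub>0 \<omega>\<^sub>0 = h\<^sub>0"
      by blast
    have "is_isom (\<lambda>h. s w h \<omega>)" for \<omega>
      using is_isom_eval_equivariant_sections[OF orbit _ sections initial] \<open>\<forall>\<omega>. is_isom (A \<omega>)\<close> by blast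
    with sections show "Ex ?conjugacy"
      by (intro exI[of _ "\<lambda>\<omega> h. s w h \<omega>"])
         (auto simp: is_isom_imp_is_homeo cont_pointwise_def equivariant_section_def)
  qed
  also have "\<dots> \<longleftrightarrow> ?P3"
    by (simp add: equivariant_section_def conj_ac)
  finally show ?thesis .
qed

end
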